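(* Let $X,X_1,X_2,\dots$ be i.i.d. positive random variables with $\mathbb{E}X=1$ and $\mathbb{E}X^2<\infty$, let $p\ge2$ be an integer, and let $T_n=\frac{X_1^2+\dots+X_n^2}{X_1+\dots+X_n}$. If the sequence $(\mathbb{E}T_n^p)_n$ is bounded, then $\mathbb{E}X^p<\infty$. Moreover, for every $n\ge2$, $$\mathbb{E}\,\frac{X_1^{2p}}{\left(\frac1n(X_1+X_2+\dots+X_n)\right)^p}\ \ge\ 2^{-p}n^p\,\mathbb{E}\left[X^p1_{\{X\ge n\}}\right].$$ *)

theory Defs
  imports "HOL-Probability.Probability"
begin

end

theory Submission
  imports Defs
begin

(* Split S_n = X_1 + R with R = X_2 + ... + X_n, which is independent of X_1 and has mean n - 1.
   Conditionally on X_1 = x, Jensen's inequality for the convex function t \<mapsto> (x + t)^-p gives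
   E (x + R)^-p \<ge> (x + n - 1)^-p. We use it in tangent-line form: the tangent of t^-p at x + n - 1
   lies below the graph, and its linear term has mean zero by independence once the weight in front
   is truncated to make everything integrable. On {X_1 \<ge> n} we have X_1 + n - 1 \<le> 2 X_1, which
   gives the second claim. For the first take n = 2: X_1^2p / (S_2/2)^p \<le> 2^p T_2^p. *)

lemma inverse_power_tangent:
  fixes u v :: real
  assumes "u > 0" "v > 0"
  shows "1 / v ^ p - real p * (u - v) / v ^ Suc p \<le> 1 / u ^ p"
proof -
  have "1 + real p * (v / u - 1) \<le> (v / u) ^ p"
    using Bernoulli_inequality[of "v / u - 1" p] assms by simp
  moreover have "1 - real p * (u - v) / v \<le> 1 + real p * (v / u - 1)"
  proof -
    have "(u - v) / v + (v / u - 1) = (u - v)\<^sup>2 / (u * v)"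
      using assms by (simp add: field_simps power2_eq_square)
    then have "real p * ((u - v) / v + (v / u - 1)) \<ge> 0" using assms by simp
    then show ?thesis by (simp add: ring_distribs)
  qed
  ultimately have "1 - real p * (u - v) / v \<le> (v / u) ^ p" by linarith
  then have "(1 - real p * (u - v) / v) / v ^ p \<le> (v / u) ^ p / v ^ p"
    using assms by (intro divide_right_mono) auto
  then show ?thesis using assms by (simp add: power_divide diff_divide_distrib)
qed

lemma half_power_le_power_div_shift:
  fixes y c :: real
  assumes "0 \<le> c" "c \<le> y"
  shows "(y / 2) ^ p \<le> y ^ (2 * p) / (y + c) ^ p"
proof (cases "y = 0")
  case True
  then show ?thesis using assms by (cases p) auto
next
  case False
  then have "y > 0" using assms by simp
  have "(y / 2) ^ p = y ^ (2 * p) / (2 * y) ^ p"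
    using \<open>y > 0\<close> by (simp add: power_mult_distrib power_divide power_mult power2_eq_square field_simps)
  also have "\<dots> \<le> y ^ (2 * p) / (y + c) ^ p"
    using assms \<open>y > 0\<close> by (intro divide_left_mono power_mono mult_pos_pos zero_less_power) auto
  finally show ?thesis .
qed

(* No sign condition on d, since ennreal sends negative reals to 0: monotone convergence needs
   monotonicity also outside space M, where the denominators are not controlled. *)
lemma incseq_ennreal_min_of_nat_divide:
  fixes x d :: real
  assumes "0 \<le> x"
  shows "incseq (\<lambda>K::nat. ennreal (min x (real K) / d))"
proof (cases "0 \<le> d")
  case True
  then show ?thesis by (auto simp: incseq_def intro!: ennreal_leI divide_right_mono)
next
  case False
  then have "min x (real K) / d \<le> 0" for K :: nat
    using assms by (simp add: divide_nonneg_neg)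
  then show ?thesis by (simp add: incseq_def ennreal_neg)
qed

lemma SUP_ennreal_min_of_nat_divide:
  fixes x d :: real
  assumes "0 \<le> x"
  shows "(SUP K::nat. ennreal (min x (real K) / d)) = ennreal (x / d)"
proof (rule antisym)
  obtain K0 :: nat where K0: "x \<le> real K0" using real_arch_simple by blast
  show "(SUP K::nat. ennreal (min x (real K) / d)) \<le> ennreal (x / d)"
  proof (rule SUP_least)
    fix K :: nat
    have "ennreal (min x (real K) / d) \<le> ennreal (min x (real (max K K0)) / d)"
      using incseq_ennreal_min_of_nat_divide[OF assms] by (simp add: incseq_def)
    also have "\<dots> = ennreal (x / d)" using K0 by simp
    finally show "ennreal (min x (real K) / d) \<le> ennreal (x / d)" .
  qed
  have "ennreal (x / d) = ennreal (min x (real K0) / d)" using K0 by simp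
  also have "\<dots> \<le> (SUP K::nat. ennreal (min x (real K) / d))" by (rule SUP_upper) simp
  finally show "ennreal (x / d) \<le> (SUP K::nat. ennreal (min x (real K) / d))" .
qed

lemma integral_le_nn_integral:
  fixes f :: "'a \<Rightarrow> real"
  assumes "integrable M f"
  shows "ennreal (integral\<^sup>L M f) \<le> (\<integral>\<^sup>+x. ennreal (f x) \<partial>M)"
proof -
  have "integral\<^sup>L M f \<le> enn2real (\<integral>\<^sup>+x. ennreal (f x) \<partial>M)"
    unfolding real_lebesgue_integral_def[OF assms]
    using enn2real_nonneg[of "\<integral>\<^sup>+x. ennreal (- f x) \<partial>M"] by linarith
  then have "ennreal (integral\<^sup>L M f) \<le> ennreal (enn2real (\<integral>\<^sup>+x. ennreal (f x) \<partial>M))"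
    by (rule ennreal_leI)
  also have "\<dots> = (\<integral>\<^sup>+x. ennreal (f x) \<partial>M)"
    using integrableD(2)[OF assms] by (simp add: less_top)
  finally show ?thesis .
qed

lemma nn_integral_cong_distr:
  assumes "distr M N X = distr M N Y" "X \<in> measurable M N" "Y \<in> measurable M N"
    and "f \<in> borel_measurable N"
  shows "(\<integral>\<^sup>+\<omega>. f (X \<omega>) \<partial>M) = (\<integral>\<^sup>+\<omega>. f (Y \<omega>) \<partial>M)"
  using assms by (metis measurable_distr_eq1 nn_integral_distr)

lemma
  fixes X Y :: "'a \<Rightarrow> real"
  assumes "distr M borel X = distr M borel Y" "X \<in> borel_measurable M" "Y \<in> borel_measurable M"
  shows integrable_cong_distr: "integrable M X \<longleftrightarrow> integrable M Y"
    and integral_cong_distr: "integral\<^sup>L M X = integral\<^sup>L M Y"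
  using integrable_distr_eq[of X M borel "\<lambda>x. x"] integrable_distr_eq[of Y M borel "\<lambda>x. x"]
    integral_distr[of X M borel "\<lambda>x. x"] integral_distr[of Y M borel "\<lambda>x. x"] assms
  by simp_all

lemma (in prob_space) nn_integral_div_power_indep_expectation_le_bounded:
  fixes Y R :: "'a \<Rightarrow> real" and \<phi> :: "real \<Rightarrow> real"
  assumes indep: "indep_var borel Y borel R"
    and Y_pos: "\<And>\<omega>. \<omega> \<in> space M \<Longrightarrow> Y \<omega> > 0"
    and R_nonneg: "\<And>\<omega>. \<omega> \<in> space M \<Longrightarrow> R \<omega> \<ge> 0"
    and int_R: "integrable M R" and mean_pos: "expectation R > 0"
    and [measurable]: "\<phi> \<in> borel_measurable borel"
    and \<phi>_bounds: "\<And>y. 0 \<le> \<phi> y \<and> \<phi> y \<le> B"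
  shows "(\<integral>\<^sup>+\<omega>. ennreal (\<phi> (Y \<omega>) / (Y \<omega> + expectation R) ^ p) \<partial>M)
    \<le> (\<integral>\<^sup>+\<omega>. ennreal (\<phi> (Y \<omega>) / (Y \<omega> + R \<omega>) ^ p) \<partial>M)"
proof -
  define m where "m = expectation R"
  define a where "a \<omega> = \<phi> (Y \<omega>) / (Y \<omega> + m) ^ p" for \<omega>
  define g where "g y = real p * \<phi> y / (y + m) ^ Suc p" for y
  have [measurable]: "Y \<in> borel_measurable M" "R \<in> borel_measurable M"
    using indep unfolding indep_var_eq by auto
  have [measurable]: "g \<in> borel_measurable borel"
    unfolding g_def by measurable
  have m_pos: "m > 0"
    using mean_pos unfolding m_def .
  have div_shift_bounds: "0 \<le> c / (y + m) ^ k \<and> c / (y + m) ^ k \<le> C / m ^ k"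
    if "0 \<le> c" "c \<le> C" "0 < y" for c C y k
  proof -
    have "c / (y + m) ^ k \<le> c / m ^ k"
      using that m_pos by (intro divide_left_mono power_mono mult_pos_pos zero_less_power) auto
    also have "\<dots> \<le> C / m ^ k"
      using that m_pos by (intro divide_right_mono) auto
    finally show ?thesis using that m_pos by simp
  qed
  have [measurable]: "a \<in> borel_measurable M"
    unfolding a_def by measurable
  have a_bounds: "0 \<le> a \<omega> \<and> a \<omega> \<le> B / m ^ p" if "\<omega> \<in> space M" for \<omega>
    unfolding a_def using div_shift_bounds \<phi>_bounds Y_pos[OF that] by blast
  have g_bounds: "0 \<le> g (Y \<omega>) \<and> g (Y \<omega>) \<le> real p * B / m ^ Suc p" if "\<omega> \<in> space M" for \<omega>
    unfolding g_def using \<phi>_bounds Y_pos[OF that]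
    by (intro div_shift_bounds) (auto intro: mult_left_mono)
  have int_a: "integrable M a"
    using a_bounds by (intro integrable_const_bound[where B="B / m ^ p"] AE_I2) auto
  have int_g: "integrable M (\<lambda>\<omega>. g (Y \<omega>))"
    using g_bounds by (intro integrable_const_bound[where B="real p * B / m ^ Suc p"] AE_I2) auto
  have indep_g: "indep_var borel (\<lambda>\<omega>. g (Y \<omega>)) borel R"
  proof -
    have "indep_var borel (g \<circ> Y) borel ((\<lambda>r. r) \<circ> R)"
      by (rule indep_var_compose[OF indep]) auto
    then show ?thesis by (simp add: comp_def)
  qed
  have int_gR: "integrable M (\<lambda>\<omega>. g (Y \<omega>) * R \<omega>)"
    by (rule indep_var_integrable[OF indep_g int_g int_R])
  have E_gR: "(\<integral>\<omega>. g (Y \<omega>) * R \<omega> \<partial>M) = (\<integral>\<omega>. g (Y \<omega>) \<partial>M) * m"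
    unfolding m_def by (rule indep_var_lebesgue_integral[OF indep_g int_g int_R])
  have tangent: "a \<omega> - g (Y \<omega>) * (R \<omega> - m) \<le> \<phi> (Y \<omega>) / (Y \<omega> + R \<omega>) ^ p"
    if "\<omega> \<in> space M" for \<omega>
  proof -
    have "\<phi> (Y \<omega>) * (1 / (Y \<omega> + m) ^ p - real p * ((Y \<omega> + R \<omega>) - (Y \<omega> + m)) / (Y \<omega> + m) ^ Suc p)
        \<le> \<phi> (Y \<omega>) * (1 / (Y \<omega> + R \<omega>) ^ p)"
      using Y_pos[OF that] R_nonneg[OF that] m_pos \<phi>_bounds
      by (intro mult_left_mono inverse_power_tangent) auto
    then show ?thesis
      unfolding a_def g_def by (simp add: field_simps)
  qed
  have "(\<integral>\<^sup>+\<omega>. ennreal (a \<omega>) \<partial>M) = ennreal (\<integral>\<omega>. a \<omega> \<partial>M)"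
    using a_bounds by (intro nn_integral_eq_integral int_a AE_I2) auto
  also have "(\<integral>\<omega>. a \<omega> \<partial>M) = (\<integral>\<omega>. a \<omega> - g (Y \<omega>) * (R \<omega> - m) \<partial>M)"
    using int_a int_g int_gR E_gR by (simp add: right_diff_distrib)
  also have "ennreal \<dots> \<le> (\<integral>\<^sup>+\<omega>. ennreal (a \<omega> - g (Y \<omega>) * (R \<omega> - m)) \<partial>M)"
    using int_a int_g int_gR by (intro integral_le_nn_integral) (simp add: right_diff_distrib)
  also have "\<dots> \<le> (\<integral>\<^sup>+\<omega>. ennreal (\<phi> (Y \<omega>) / (Y \<omega> + R \<omega>) ^ p) \<partial>M)"
    by (intro nn_integral_mono ennreal_leI tangent)
  finally show ?thesis
    unfolding a_def m_def .
qed

lemma (in prob_space) nn_integral_div_power_indep_expectation_le: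
  fixes Y R :: "'a \<Rightarrow> real" and \<phi> :: "real \<Rightarrow> real"
  assumes indep: "indep_var borel Y borel R"
    and Y_pos: "\<And>\<omega>. \<omega> \<in> space M \<Longrightarrow> Y \<omega> > 0"
    and R_nonneg: "\<And>\<omega>. \<omega> \<in> space M \<Longrightarrow> R \<omega> \<ge> 0"
    and "integrable M R" "expectation R > 0"
    and [measurable]: "\<phi> \<in> borel_measurable borel"
    and \<phi>_nonneg: "\<And>y. 0 \<le> \<phi> y"
  shows "(\<integral>\<^sup>+\<omega>. ennreal (\<phi> (Y \<omega>) / (Y \<omega> + expectation R) ^ p) \<partial>M)
    \<le> (\<integral>\<^sup>+\<omega>. ennreal (\<phi> (Y \<omega>) / (Y \<omega> + R \<omega>) ^ p) \<partial>M)"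
proof -
  have [measurable]: "Y \<in> borel_measurable M" "R \<in> borel_measurable M"
    using indep unfolding indep_var_eq by auto
  have "(\<integral>\<^sup>+\<omega>. ennreal (\<phi> (Y \<omega>) / (Y \<omega> + expectation R) ^ p) \<partial>M)
      = (\<integral>\<^sup>+\<omega>. (SUP K::nat. ennreal (min (\<phi> (Y \<omega>)) (real K) / (Y \<omega> + expectation R) ^ p)) \<partial>M)"
    using \<phi>_nonneg by (simp add: SUP_ennreal_min_of_nat_divide)
  also have "\<dots> = (SUP K::nat. \<integral>\<^sup>+\<omega>. ennreal (min (\<phi> (Y \<omega>)) (real K) / (Y \<omega> + expectation R) ^ p) \<partial>M)"
    using incseq_ennreal_min_of_nat_divide[OF \<phi>_nonneg]
    by (intro nn_integral_monotone_convergence_SUP) (auto simp: incseq_def le_fun_def)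
  also have "\<dots> \<le> (\<integral>\<^sup>+\<omega>. ennreal (\<phi> (Y \<omega>) / (Y \<omega> + R \<omega>) ^ p) \<partial>M)"
  proof (rule SUP_least)
    fix K :: nat
    have "(\<integral>\<^sup>+\<omega>. ennreal (min (\<phi> (Y \<omega>)) (real K) / (Y \<omega> + expectation R) ^ p) \<partial>M)
        \<le> (\<integral>\<^sup>+\<omega>. ennreal (min (\<phi> (Y \<omega>)) (real K) / (Y \<omega> + R \<omega>) ^ p) \<partial>M)"
      using \<phi>_nonneg
      by (intro nn_integral_div_power_indep_expectation_le_bounded[where B="real K"] assms) auto
    also have "\<dots> \<le> (\<integral>\<^sup>+\<omega>. ennreal (\<phi> (Y \<omega>) / (Y \<omega> + R \<omega>) ^ p) \<partial>M)"
      using Y_pos R_nonneg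
      by (intro nn_integral_mono ennreal_leI divide_right_mono zero_le_power) (auto intro: add_nonneg_nonneg less_imp_le)
    finally show "(\<integral>\<^sup>+\<omega>. ennreal (min (\<phi> (Y \<omega>)) (real K) / (Y \<omega> + expectation R) ^ p) \<partial>M)
        \<le> (\<integral>\<^sup>+\<omega>. ennreal (\<phi> (Y \<omega>) / (Y \<omega> + R \<omega>) ^ p) \<partial>M)" .
  qed
  finally show ?thesis .
qed

lemma (in prob_space) nn_integral_power_finite_if_tail_finite:
  fixes Z :: "'a \<Rightarrow> real"
  assumes [measurable]: "Z \<in> borel_measurable M"
    and Z_nonneg: "\<And>\<omega>. \<omega> \<in> space M \<Longrightarrow> 0 \<le> Z \<omega>" and "0 \<le> c"
    and tail: "(\<integral>\<^sup>+\<omega>. ennreal (Z \<omega> ^ p * indicator {\<omega>'. Z \<omega>' \<ge> c} \<omega>) \<partial>M) < \<infinity>"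
  shows "(\<integral>\<^sup>+\<omega>. ennreal (Z \<omega> ^ p) \<partial>M) < \<infinity>"
proof -
  have "(\<integral>\<^sup>+\<omega>. ennreal (Z \<omega> ^ p) \<partial>M)
      \<le> (\<integral>\<^sup>+\<omega>. ennreal (Z \<omega> ^ p * indicator {\<omega>'. Z \<omega>' \<ge> c} \<omega>) + ennreal (c ^ p) \<partial>M)"
  proof (intro nn_integral_mono)
    fix \<omega> assume "\<omega> \<in> space M"
    then have "Z \<omega> ^ p \<le> Z \<omega> ^ p * indicator {\<omega>'. Z \<omega>' \<ge> c} \<omega> + c ^ p"
      using Z_nonneg \<open>0 \<le> c\<close> by (cases "Z \<omega> \<ge> c") (auto intro: power_mono)
    then show "ennreal (Z \<omega> ^ p) \<le> ennreal (Z \<omega> ^ p * indicator {\<omega>'. Z \<omega>' \<ge> c} \<omega>) + ennreal (c ^ p)"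
      using Z_nonneg[OF \<open>\<omega> \<in> space M\<close>] \<open>0 \<le> c\<close>
      by (simp add: ennreal_plus[symmetric] ennreal_leI del: ennreal_plus)
  qed
  also have "\<dots> = (\<integral>\<^sup>+\<omega>. ennreal (Z \<omega> ^ p * indicator {\<omega>'. Z \<omega>' \<ge> c} \<omega>) \<partial>M) + ennreal (c ^ p)"
    by (subst nn_integral_add) (auto simp: emeasure_space_1)
  also have "\<dots> < \<infinity>"
    using tail by simp
  finally show ?thesis .
qed

lemma (in prob_space) tail_moment_le_self_normalized_moment:
  fixes X :: "nat \<Rightarrow> 'a \<Rightarrow> real" and p n :: nat
  assumes indep: "indep_vars (\<lambda>_. borel) X UNIV"
    and ident: "\<And>i. distr M borel (X i) = distr M borel (X 0)"
    and pos: "\<And>i \<omega>. \<omega> \<in> space M \<Longrightarrow> X i \<omega> > 0"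
    and int1: "integrable M (X 0)" and mean: "expectation (X 0) = 1"
    and n: "n \<ge> 2"
  shows "ennreal ((1 / 2) ^ p * real n ^ p) *
      (\<integral>\<^sup>+\<omega>. ennreal (X 0 \<omega> ^ p * indicator {\<omega>'. X 0 \<omega>' \<ge> real n} \<omega>) \<partial>M)
    \<le> (\<integral>\<^sup>+\<omega>. ennreal (X 1 \<omega> ^ (2 * p) / ((1 / real n) * (\<Sum>i\<in>{1..n}. X i \<omega>)) ^ p) \<partial>M)"
proof -
  have meas [measurable]: "X i \<in> borel_measurable M" for i
    using indep unfolding indep_vars_def by auto
  define R where "R \<omega> = (\<Sum>i\<in>{2..n}. X i \<omega>)" for \<omega>
  define \<phi> where "\<phi> y = real n ^ p * y ^ (2 * p) * indicator {real n..} y" for y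
  have [measurable]: "\<phi> \<in> borel_measurable borel"
    unfolding \<phi>_def by measurable
  have \<phi>_nonneg: "0 \<le> \<phi> y" for y
    by (simp add: \<phi>_def power_mult)
  have indep_R: "indep_var borel (X 1) borel R"
    unfolding R_def by (intro indep_vars_sum indep_vars_subset[OF indep]) auto
  have int_X: "integrable M (X i)" for i
    using int1 integrable_cong_distr[OF ident meas meas] by simp
  have mean_X: "expectation (X i) = 1" for i
    using mean integral_cong_distr[OF ident meas meas] by simp
  have int_R: "integrable M R"
    unfolding R_def using int_X by auto
  have mean_R: "expectation R = real n - 1"
    unfolding R_def using n int_X mean_X by (simp add: of_nat_diff)
  have R_nonneg: "R \<omega> \<ge> 0" if "\<omega> \<in> space M" for \<omega>
    unfolding R_def using pos[OF that] by (intro sum_nonneg less_imp_le) auto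
  have sum_split: "(\<Sum>i\<in>{1..n}. X i \<omega>) = X 1 \<omega> + R \<omega>" for \<omega>
    unfolding R_def using n by (simp add: sum.atLeast_Suc_atMost numeral_2_eq_2)
  have "ennreal ((1 / 2) ^ p * real n ^ p) *
      (\<integral>\<^sup>+\<omega>. ennreal (X 0 \<omega> ^ p * indicator {\<omega>'. X 0 \<omega>' \<ge> real n} \<omega>) \<partial>M)
    = ennreal ((1 / 2) ^ p * real n ^ p) *
      (\<integral>\<^sup>+\<omega>. ennreal (X 1 \<omega> ^ p * indicator {real n..} (X 1 \<omega>)) \<partial>M)"
    using nn_integral_cong_distr[OF ident[of 1, symmetric], of "\<lambda>y. ennreal (y ^ p * indicator {real n..} y)"]
    by (simp add: indicator_def)
  also have "\<dots> = (\<integral>\<^sup>+\<omega>. ennreal ((1 / 2) ^ p * real n ^ p * (X 1 \<omega> ^ p * indicator {real n..} (X 1 \<omega>))) \<partial>M)"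
    by (subst nn_integral_cmult[symmetric]) (auto simp: ennreal_mult')
  also have "\<dots> \<le> (\<integral>\<^sup>+\<omega>. ennreal (\<phi> (X 1 \<omega>) / (X 1 \<omega> + expectation R) ^ p) \<partial>M)"
  proof (intro nn_integral_mono ennreal_leI)
    fix \<omega> assume "\<omega> \<in> space M"
    show "(1 / 2) ^ p * real n ^ p * (X 1 \<omega> ^ p * indicator {real n..} (X 1 \<omega>))
        \<le> \<phi> (X 1 \<omega>) / (X 1 \<omega> + expectation R) ^ p"
    proof (cases "real n \<le> X 1 \<omega>")
      case True
      then have "(X 1 \<omega> / 2) ^ p \<le> X 1 \<omega> ^ (2 * p) / (X 1 \<omega> + (real n - 1)) ^ p"
        using n by (intro half_power_le_power_div_shift) auto
      then have "real n ^ p * (X 1 \<omega> / 2) ^ p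
          \<le> real n ^ p * (X 1 \<omega> ^ (2 * p) / (X 1 \<omega> + (real n - 1)) ^ p)"
        by (rule mult_left_mono) simp
      then show ?thesis
        using True unfolding \<phi>_def mean_R
        by (simp add: power_divide power_one_over mult_left_mono mult.assoc)
    qed (simp add: \<phi>_def)
  qed
  also have "\<dots> \<le> (\<integral>\<^sup>+\<omega>. ennreal (\<phi> (X 1 \<omega>) / (X 1 \<omega> + R \<omega>) ^ p) \<partial>M)"
    using pos n R_nonneg \<phi>_nonneg mean_R
    by (intro nn_integral_div_power_indep_expectation_le[OF indep_R _ _ int_R]) auto
  also have "\<dots> \<le> (\<integral>\<^sup>+\<omega>. ennreal (X 1 \<omega> ^ (2 * p) / ((1 / real n) * (\<Sum>i\<in>{1..n}. X i \<omega>)) ^ p) \<partial>M)"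
  proof (intro nn_integral_mono ennreal_leI)
    fix \<omega> assume \<omega>: "\<omega> \<in> space M"
    have "\<phi> (X 1 \<omega>) \<le> real n ^ p * X 1 \<omega> ^ (2 * p)"
      by (simp add: \<phi>_def indicator_def power_mult)
    then have "\<phi> (X 1 \<omega>) / (X 1 \<omega> + R \<omega>) ^ p \<le> real n ^ p * X 1 \<omega> ^ (2 * p) / (X 1 \<omega> + R \<omega>) ^ p"
      using pos[OF \<omega>, of 1] R_nonneg[OF \<omega>] by (intro divide_right_mono zero_le_power) auto
    also have "\<dots> = X 1 \<omega> ^ (2 * p) / ((1 / real n) * (\<Sum>i\<in>{1..n}. X i \<omega>)) ^ p"
      unfolding sum_split by (simp add: power_divide mult.commute)
    finally show "\<phi> (X 1 \<omega>) / (X 1 \<omega> + R \<omega>) ^ p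
        \<le> X 1 \<omega> ^ (2 * p) / ((1 / real n) * (\<Sum>i\<in>{1..n}. X i \<omega>)) ^ p" .
  qed
  finally show ?thesis .
qed

lemma (in prob_space) moment_finite_if_self_normalized_moment_finite:
  fixes X :: "nat \<Rightarrow> 'a \<Rightarrow> real" and p :: nat
  assumes indep: "indep_vars (\<lambda>_. borel) X UNIV"
    and ident: "\<And>i. distr M borel (X i) = distr M borel (X 0)"
    and pos: "\<And>i \<omega>. \<omega> \<in> space M \<Longrightarrow> X i \<omega> > 0"
    and int1: "integrable M (X 0)" and mean: "expectation (X 0) = 1"
    and T2: "(\<integral>\<^sup>+\<omega>. ennreal (((\<Sum>i\<in>{1..2}. (X i \<omega>)\<^sup>2) / (\<Sum>i\<in>{1..2}. X i \<omega>)) ^ p) \<partial>M) < \<infinity>"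
  shows "(\<integral>\<^sup>+\<omega>. ennreal (X 0 \<omega> ^ p) \<partial>M) < \<infinity>"
proof -
  have [measurable]: "X i \<in> borel_measurable M" for i
    using indep unfolding indep_vars_def by auto
  have "(\<integral>\<^sup>+\<omega>. ennreal (X 0 \<omega> ^ p * indicator {\<omega>'. X 0 \<omega>' \<ge> 2} \<omega>) \<partial>M)
      \<le> (\<integral>\<^sup>+\<omega>. ennreal (X 1 \<omega> ^ (2 * p) / ((1 / 2) * (\<Sum>i\<in>{1..2}. X i \<omega>)) ^ p) \<partial>M)"
    using tail_moment_le_self_normalized_moment[OF indep ident pos int1 mean, of 2 p]
    by (simp add: power_one_over)
  also have "\<dots> \<le> (\<integral>\<^sup>+\<omega>. ennreal (2 ^ p) * ennreal (((\<Sum>i\<in>{1..2}. (X i \<omega>)\<^sup>2) / (\<Sum>i\<in>{1..2}. X i \<omega>)) ^ p) \<partial>M)"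
  proof (intro nn_integral_mono)
    fix \<omega> assume \<omega>: "\<omega> \<in> space M"
    define S where "S = (\<Sum>i\<in>{1..2::nat}. X i \<omega>)"
    have "S > 0"
      unfolding S_def using pos[OF \<omega>] by (intro sum_pos) auto
    have "X 1 \<omega> ^ (2 * p) / ((1 / 2) * S) ^ p = 2 ^ p * ((X 1 \<omega>)\<^sup>2 / S) ^ p"
      by (simp add: power_mult power_divide power_mult_distrib power_one_over)
    also have "\<dots> \<le> 2 ^ p * ((\<Sum>i\<in>{1..2}. (X i \<omega>)\<^sup>2) / S) ^ p"
      using \<open>S > 0\<close> by (intro mult_left_mono power_mono divide_right_mono member_le_sum) auto
    finally show "ennreal (X 1 \<omega> ^ (2 * p) / ((1 / 2) * (\<Sum>i\<in>{1..2}. X i \<omega>)) ^ p)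
        \<le> ennreal (2 ^ p) * ennreal (((\<Sum>i\<in>{1..2}. (X i \<omega>)\<^sup>2) / (\<Sum>i\<in>{1..2}. X i \<omega>)) ^ p)"
      unfolding S_def by (subst ennreal_mult'[symmetric]) (auto intro: ennreal_leI)
  qed
  also have "\<dots> = ennreal (2 ^ p) * (\<integral>\<^sup>+\<omega>. ennreal (((\<Sum>i\<in>{1..2}. (X i \<omega>)\<^sup>2) / (\<Sum>i\<in>{1..2}. X i \<omega>)) ^ p) \<partial>M)"
    by (rule nn_integral_cmult) measurable
  also have "\<dots> < \<infinity>"
    using T2 by (simp add: ennreal_mult_less_top)
  finally have tail_finite: "(\<integral>\<^sup>+\<omega>. ennreal (X 0 \<omega> ^ p * indicator {\<omega>'. X 0 \<omega>' \<ge> 2} \<omega>) \<partial>M) < \<infinity>" .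
  show ?thesis
    using pos by (intro nn_integral_power_finite_if_tail_finite[OF _ _ _ tail_finite]) (auto intro: less_imp_le)
qed

theorem lemma2:
  fixes M :: "'a measure" and X :: "nat \<Rightarrow> 'a \<Rightarrow> real" and p :: nat
  assumes "prob_space M"
    and indep: "prob_space.indep_vars M (\<lambda>_. borel) X UNIV"
    and ident: "\<And>i. distr M borel (X i) = distr M borel (X 0)"
    and pos: "\<And>i \<omega>. \<omega> \<in> space M \<Longrightarrow> X i \<omega> > 0"
    and int1: "integrable M (X 0)"
    and mean: "prob_space.expectation M (X 0) = 1"
    and int2: "integrable M (\<lambda>\<omega>. (X 0 \<omega>)\<^sup>2)"
    and p: "p \<ge> 2"
  shows "((\<exists>C < \<infinity>. \<forall>n. (\<integral>\<^sup>+ \<omega>. ennreal (((\<Sum>i\<in>{1..n}. (X i \<omega>)\<^sup>2) / (\<Sum>i\<in>{1..n}. X i \<omega>)) ^ p) \<partial>M) \<le> C)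
           \<longrightarrow> (\<integral>\<^sup>+ \<omega>. ennreal ((X 0 \<omega>) ^ p) \<partial>M) < \<infinity>)
       \<and> (\<forall>n::nat. n \<ge> 2 \<longrightarrow>
           (\<integral>\<^sup>+ \<omega>. ennreal ((X 1 \<omega>) ^ (2 * p) / ((1 / real n) * (\<Sum>i\<in>{1..n}. X i \<omega>)) ^ p) \<partial>M)
           \<ge> ennreal ((1 / 2) ^ p * real n ^ p) *
             (\<integral>\<^sup>+ \<omega>. ennreal ((X 0 \<omega>) ^ p * indicator {\<omega>'. X 0 \<omega>' \<ge> real n} \<omega>) \<partial>M))"
proof (intro conjI impI allI)
  interpret prob_space M by fact
  show "(\<integral>\<^sup>+ \<omega>. ennreal ((X 0 \<omega>) ^ p) \<partial>M) < \<infinity>"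
    if bounded: "\<exists>C < \<infinity>. \<forall>n. (\<integral>\<^sup>+ \<omega>. ennreal (((\<Sum>i\<in>{1..n}. (X i \<omega>)\<^sup>2) / (\<Sum>i\<in>{1..n}. X i \<omega>)) ^ p) \<partial>M) \<le> C"
  proof -
    obtain C where "C < \<infinity>"
      and "(\<integral>\<^sup>+ \<omega>. ennreal (((\<Sum>i\<in>{1..2}. (X i \<omega>)\<^sup>2) / (\<Sum>i\<in>{1..2}. X i \<omega>)) ^ p) \<partial>M) \<le> C"
      using bounded by blast
    then have T2_finite:
      "(\<integral>\<^sup>+ \<omega>. ennreal (((\<Sum>i\<in>{1..2}. (X i \<omega>)\<^sup>2) / (\<Sum>i\<in>{1..2}. X i \<omega>)) ^ p) \<partial>M) < \<infinity>"
      by order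
    show ?thesis
      by (rule moment_finite_if_self_normalized_moment_finite[OF indep ident pos int1 mean T2_finite])
  qed
  show "(\<integral>\<^sup>+ \<omega>. ennreal ((X 1 \<omega>) ^ (2 * p) / ((1 / real n) * (\<Sum>i\<in>{1..n}. X i \<omega>)) ^ p) \<partial>M)
      \<ge> ennreal ((1 / 2) ^ p * real n ^ p) *
        (\<integral>\<^sup>+ \<omega>. ennreal ((X 0 \<omega>) ^ p * indicator {\<omega>'. X 0 \<omega>' \<ge> real n} \<omega>) \<partial>M)"
    if "n \<ge> 2" for n
    using tail_moment_le_self_normalized_moment[OF indep ident pos int1 mean that] .
qed

end
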